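(* Let $k \geq 1$ be an integer. There exist complex matrices $W_{(v)}, W_{(w)}$ of size $(4k+1) \times (2k+2)$, with columns indexed by $0,\ldots,2k+1$, such that, writing $W := [W_{(v)}, W_{(w)}]$ for the $(4k+1)\times(4k+4)$ block matrix and $c^{(v)}_i, c^{(w)}_i$ for the $i$-th columns of $W_{(v)}, W_{(w)}$: (i) $c^{(v)}_i \perp c^{(v)}_j$ whenever $j - i \not\equiv 0, 1, 2k+1 \pmod{2k+2}$; (ii) $c^{(w)}_i \perp c^{(w)}_j$ whenever $j - i \not\equiv 0, 1, 2k+1 \pmod{2k+2}$; (iii) $c^{(v)}_i \perp c^{(w)}_j$ whenever $i \neq j$; (iv) every $(4k+1)\times(4k+1)$ submatrix of $W$ (formed by any $4k+1$ columns) is nonsingular.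
   Context: Orthogonality is with respect to the standard inner product on $\mathbb{C}^{4k+1}$. *)

theory Defs
  imports "Jordan_Normal_Form.Determinant" "Jordan_Normal_Form.DL_Submatrix"
begin

definition orth :: "complex vec \<Rightarrow> complex vec \<Rightarrow> bool" where
  "orth v w \<longleftrightarrow> v \<bullet>c w = 0"

definition block_cols :: "'a mat \<Rightarrow> 'a mat \<Rightarrow> 'a mat" where
  "block_cols A B = mat (dim_row A) (dim_col A + dim_col B)
     (\<lambda>(i,j). if j < dim_col A then A $$ (i,j) else B $$ (i, j - dim_col A))"

end

theory Submission
  imports Defs
begin

text \<open>
  Put \<open>m = 2 * k + 2\<close> and \<open>\<omega> = e^(2\<pi>i/m)\<close>. The first \<open>m\<close> rows of \<open>W_v\<close> and \<open>W_w\<close> are the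
  Fourier modes \<open>\<omega>^(r i)\<close>, weighted by \<open>e_r = \<omega>^r - \<eta>\<close> and by \<open>g / cnj e_r\<close>; the remaining
  \<open>m - 3\<close> rows carry the modes \<open>\<omega>^(s i)\<close>, \<open>2 \<le> s \<le> m - 2\<close>, in \<open>W_w\<close> only, weighted by \<open>\<tau>_s\<close>.
  The three Gram matrices are then circulant with symbols \<open>P_s = |\<omega>^s - \<eta>|\<^sup>2\<close>, the constant \<open>g\<close>,
  and \<open>g\<^sup>2 / P_s + \<tau>_s\<^sup>2 = Q_s = |\<omega>^s - cnj \<eta>|\<^sup>2\<close>. Since \<open>P\<close> and \<open>Q\<close> are trigonometric
  polynomials of degree one, this gives (i)--(iii); \<open>Re \<eta>\<close> is chosen so that \<open>P_s Q_s \<ge> g\<^sup>2\<close> with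
  equality exactly for \<open>s \<in> {0, \<plusminus>1}\<close>, so \<open>\<tau>_s\<close> is real, and nonzero precisely on the extra rows.

  For (iv), a vector in the kernel of \<open>[W_v, W_w]\<close> has both halves' Fourier transforms supported on
  \<open>{0, \<plusminus>1}\<close>, and the first \<open>m\<close> rows tie the two halves together. Hence its \<open>4 k + 4\<close> entries are
  nonzero multiples of the values of one quadratic at the distinct points \<open>\<omega>^i\<close> and \<open>\<omega>^i / \<lambda>\<close>
  (\<open>\<lambda> = P_1 / g \<noteq> 1\<close>). If it is supported on \<open>4 k + 1\<close> columns, the quadratic has three roots, so
  the vector vanishes.
\<close>

definition e_frac :: "nat \<Rightarrow> real \<Rightarrow> complex" where
  "e_frac m x = cis (2 * pi * x / real m)"

lemma e_frac_add: "e_frac m x * e_frac m y = e_frac m (x + y)"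
  unfolding e_frac_def cis_mult by (simp add: add_divide_distrib algebra_simps)

lemma cnj_e_frac: "cnj (e_frac m x) = e_frac m (- x)"
  unfolding e_frac_def cis_cnj by simp

lemma e_frac_0 [simp]: "e_frac m 0 = 1"
  unfolding e_frac_def by simp

lemma e_frac_neq_0 [simp]: "e_frac m x \<noteq> 0"
  unfolding e_frac_def by simp

lemma norm_e_frac [simp]: "norm (e_frac m x) = 1"
  unfolding e_frac_def by simp

lemma e_frac_mult_neg [simp]: "e_frac m x * e_frac m (- x) = 1"
  by (simp add: e_frac_add)

lemma e_frac_mult_cnj [simp]: "e_frac m x * cnj (e_frac m x) = 1"
  by (simp add: cnj_e_frac)

lemma e_frac_mult_cnj_e_frac:
  "e_frac m (x * real i) * cnj (e_frac m (x * real j)) = e_frac m (x * of_int (int i - int j))"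
  by (simp add: cnj_e_frac e_frac_add right_diff_distrib)

lemma Re_e_frac: "Re (e_frac m x) = cos (2 * pi * x / real m)"
  unfolding e_frac_def by simp

lemma Im_e_frac: "Im (e_frac m x) = sin (2 * pi * x / real m)"
  unfolding e_frac_def by simp

lemma e_frac_power: "e_frac m x ^ n = e_frac m (real n * x)"
  unfolding e_frac_def DeMoivre by (simp add: algebra_simps)

lemma e_frac_of_int_eq_1_iff:
  assumes "m > 0"
  shows "e_frac m (of_int d) = 1 \<longleftrightarrow> int m dvd d"
proof
  assume "e_frac m (of_int d) = 1"
  then have "cos (2 * pi * of_int d / real m) = 1"
    unfolding e_frac_def by (simp add: complex_eq_iff)
  then obtain t :: int where "2 * pi * of_int d / real m = of_int t * 2 * pi"
    by (auto simp: cos_one_2pi_int)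
  then have "real_of_int d = real_of_int (int m * t)"
    using assms by (simp add: field_simps)
  then show "int m dvd d"
    by (simp only: of_int_eq_iff) simp
next
  assume "int m dvd d"
  then obtain t where "d = int m * t" by auto
  then have "2 * pi * of_int d / real m = 2 * pi * of_int t"
    using assms by simp
  then show "e_frac m (of_int d) = 1"
    unfolding e_frac_def by simp
qed

lemma e_frac_shift:
  assumes "m > 0"
  shows "e_frac m (x + real m * of_int t) = e_frac m x"
  using e_frac_add[of m x "real m * of_int t"] e_frac_of_int_eq_1_iff[OF assms, of "int m * t"]
  by simp

lemma int_dvd_diff_iff_eq:
  assumes "l < m" "i < m"
  shows "int m dvd (int l - int i) \<longleftrightarrow> l = i"
  using assms by (simp flip: mod_eq_dvd_iff)

lemma e_frac_inj:
  assumes "i < m" "j < m" "e_frac m (real i) = e_frac m (real j)"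
  shows "i = j"
proof -
  have "e_frac m (of_int (int i - int j)) = e_frac m (real i) * cnj (e_frac m (real j))"
    by (simp add: cnj_e_frac e_frac_add)
  also have "\<dots> = 1"
    using assms(3) by simp
  finally have "int m dvd (int i - int j)"
    using assms(1) e_frac_of_int_eq_1_iff[of m "int i - int j"] by (simp del: of_int_diff)
  then show ?thesis
    using assms int_dvd_diff_iff_eq by blast
qed

lemma sum_e_frac:
  assumes "m > 0"
  shows "(\<Sum>r<m. e_frac m (real r * of_int d)) = (if int m dvd d then of_nat m else 0)"
proof (cases "int m dvd d")
  case True
  then have "e_frac m (real r * of_int d) = 1" for r
    using e_frac_of_int_eq_1_iff[OF assms, of "int r * d"] by simp
  then show ?thesis
    using True by simp
next
  case False
  define z where "z = e_frac m (of_int d)"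
  have "z \<noteq> 1" and "z ^ m = 1"
    using False e_frac_of_int_eq_1_iff[OF assms, of d] e_frac_of_int_eq_1_iff[OF assms, of "int m * d"]
    by (simp_all add: z_def e_frac_power)
  have "(\<Sum>r<m. e_frac m (real r * of_int d)) = (\<Sum>r<m. z ^ r)"
    by (simp add: z_def e_frac_power)
  also have "\<dots> = 0"
    using \<open>z \<noteq> 1\<close> \<open>z ^ m = 1\<close> by (simp add: geometric_sum)
  finally show ?thesis
    using False by simp
qed

lemma sum_e_frac_eq_0:
  assumes "m > 0" "\<not> int m dvd d"
  shows "(\<Sum>r<m. e_frac m (real r * of_int d)) = 0"
  using sum_e_frac[OF assms(1)] assms(2) by simp

lemma mod_notin_imp_not_dvd_diff:
  fixes i j m :: nat
  assumes "m > 0" "(int j - int i) mod int m \<notin> {0, 1, int m - 1}"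
  shows "\<not> int m dvd (int i - int j)" "\<not> int m dvd (int i - int j + 1)"
    "\<not> int m dvd (int i - int j - 1)"
proof -
  have "m > 1"
    using assms by (cases "m = 1") auto
  have "int m dvd (int i - int j) \<longleftrightarrow> (int j - int i) mod int m = 0"
    by (metis dvd_diff_commute dvd_eq_mod_eq_0)
  moreover have "int m dvd (int i - int j + 1) \<longleftrightarrow> (int j - int i) mod int m = 1 mod int m"
    using dvd_minus_iff[of "int m" "int j - int i - 1"] by (simp add: mod_eq_dvd_iff algebra_simps)
  moreover have "int m dvd (int i - int j - 1) \<longleftrightarrow> (int j - int i) mod int m = (- 1) mod int m"
    using dvd_minus_iff[of "int m" "int j - int i + 1"] by (simp add: mod_eq_dvd_iff)
  ultimately show "\<not> int m dvd (int i - int j)" "\<not> int m dvd (int i - int j + 1)"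
    "\<not> int m dvd (int i - int j - 1)"
    using assms \<open>m > 1\<close> by (auto simp: zmod_minus1)
qed

lemma sum_first_harmonics_mult_e_frac_eq_0:
  fixes \<phi> :: "nat \<Rightarrow> complex"
  assumes "m > 0" "\<not> int m dvd d" "\<not> int m dvd (d + 1)" "\<not> int m dvd (d - 1)"
    and \<phi>: "\<And>s. \<phi> s = \<alpha> + \<beta> * e_frac m (real s) + \<gamma> * e_frac m (- real s)"
  shows "(\<Sum>s<m. \<phi> s * e_frac m (real s * of_int d)) = 0"
proof -
  have "(\<Sum>s<m. \<phi> s * e_frac m (real s * of_int d))
      = \<alpha> * (\<Sum>s<m. e_frac m (real s * of_int d)) + \<beta> * (\<Sum>s<m. e_frac m (real s * of_int (d + 1)))
        + \<gamma> * (\<Sum>s<m. e_frac m (real s * of_int (d - 1)))"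
    by (simp add: \<phi> sum_distrib_left sum.distrib e_frac_add algebra_simps)
  then show ?thesis
    using sum_e_frac_eq_0[OF assms(1,2)] sum_e_frac_eq_0[OF assms(1,3)] sum_e_frac_eq_0[OF assms(1,4)]
    by simp
qed

definition dft :: "nat \<Rightarrow> (nat \<Rightarrow> complex) \<Rightarrow> nat \<Rightarrow> complex" where
  "dft m y s = (\<Sum>l<m. y l * e_frac m (real s * real l))"

lemma dft_inverse:
  assumes "i < m"
  shows "(\<Sum>s<m. dft m y s * e_frac m (- (real s * real i))) = of_nat m * y i"
proof -
  have "(\<Sum>s<m. dft m y s * e_frac m (- (real s * real i)))
      = (\<Sum>s<m. \<Sum>l<m. y l * e_frac m (real s * of_int (int l - int i)))"
    by (simp add: dft_def sum_distrib_right e_frac_add mult.assoc right_diff_distrib)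
  also have "\<dots> = (\<Sum>l<m. y l * (\<Sum>s<m. e_frac m (real s * of_int (int l - int i))))"
    unfolding sum_distrib_left by (rule sum.swap)
  also have "\<dots> = (\<Sum>l<m. y l * (if l = i then of_nat m else 0))"
  proof (rule sum.cong)
    fix l assume "l \<in> {..<m}"
    then show "y l * (\<Sum>s<m. e_frac m (real s * of_int (int l - int i)))
        = y l * (if l = i then of_nat m else 0)"
      using assms sum_e_frac[of m "int l - int i"] int_dvd_diff_iff_eq[of l m i]
      by (simp del: of_int_diff)
  qed simp
  also have "\<dots> = of_nat m * y i"
    using assms by (simp add: if_distrib cong: if_cong)
  finally show ?thesis .
qed

lemma dft_supported_near_0_imp_quadratic:
  assumes "m \<ge> 3" "i < m"
    and dft_vanishes: "\<And>s. 2 \<le> s \<Longrightarrow> s \<le> m - 2 \<Longrightarrow> dft m y s = 0"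
  shows "of_nat m * e_frac m (real i) * y i
           = dft m y (m - 1) * e_frac m (real i) ^ 2 + dft m y 0 * e_frac m (real i) + dft m y 1"
proof -
  have "of_nat m * y i = (\<Sum>s<m. dft m y s * e_frac m (- (real s * real i)))"
    using dft_inverse[OF assms(2)] by simp
  also have "\<dots> = (\<Sum>s\<in>{0, 1, m - 1}. dft m y s * e_frac m (- (real s * real i)))"
  proof (intro sum.mono_neutral_right ballI)
    fix s assume "s \<in> {..<m} - {0, 1, m - 1}"
    then have "dft m y s = 0"
      by (intro dft_vanishes) auto
    then show "dft m y s * e_frac m (- (real s * real i)) = 0"
      by simp
  qed (use assms(1) in auto)
  also have "\<dots> = dft m y 0 + dft m y 1 * e_frac m (- real i) + dft m y (m - 1) * e_frac m (real i)"
  proof -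
    have "- (real (m - 1) * real i) = real i + real m * of_int (- int i)"
      using assms(1) by (simp add: of_nat_diff algebra_simps)
    then show ?thesis
      using assms(1) e_frac_shift[of m "real i" "- int i"] by (simp add: algebra_simps)
  qed
  finally have "of_nat m * e_frac m (real i) * y i
      = e_frac m (real i) * (dft m y 0 + dft m y 1 * e_frac m (- real i) + dft m y (m - 1) * e_frac m (real i))"
    by simp
  also have "\<dots> = dft m y (m - 1) * e_frac m (real i) ^ 2 + dft m y 0 * e_frac m (real i)
      + dft m y 1 * (e_frac m (real i) * e_frac m (- real i))"
    by (simp add: algebra_simps power2_eq_square)
  finally show ?thesis
    by simp
qed

lemma quadratic_eq_0_if_three_roots:
  fixes a b c t1 t2 t3 :: "'a :: idom"
  assumes "t1 \<noteq> t2" "t1 \<noteq> t3" "t2 \<noteq> t3"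
    and "a * t1\<^sup>2 + b * t1 + c = 0" "a * t2\<^sup>2 + b * t2 + c = 0" "a * t3\<^sup>2 + b * t3 + c = 0"
  shows "a = 0 \<and> b = 0 \<and> c = 0"
proof -
  have "(t1 - t2) * (a * (t1 + t2) + b) = (a * t1\<^sup>2 + b * t1 + c) - (a * t2\<^sup>2 + b * t2 + c)"
    "(t1 - t3) * (a * (t1 + t3) + b) = (a * t1\<^sup>2 + b * t1 + c) - (a * t3\<^sup>2 + b * t3 + c)"
    by (simp_all add: algebra_simps power2_eq_square)
  then have "(t1 - t2) * (a * (t1 + t2) + b) = 0" "(t1 - t3) * (a * (t1 + t3) + b) = 0"
    using assms(4-6) by simp_all
  then have "a * (t1 + t2) + b = 0" "a * (t1 + t3) + b = 0"
    using assms(1,2) by simp_all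
  moreover have "a * (t2 - t3) = (a * (t1 + t2) + b) - (a * (t1 + t3) + b)"
    by (simp add: algebra_simps)
  ultimately have "a * (t2 - t3) = 0"
    by simp
  then have "a = 0"
    using assms(3) by simp
  then show ?thesis
    using \<open>a * (t1 + t2) + b = 0\<close> assms(4) by simp
qed

lemma cscalar_prod_col:
  assumes "A \<in> carrier_mat n a" "B \<in> carrier_mat n b" "i < a" "j < b"
  shows "col A i \<bullet>c col B j = (\<Sum>r<n. A $$ (r, i) * cnj (B $$ (r, j)))"
  using assms unfolding scalar_prod_def by (auto intro!: sum.cong simp: lessThan_atLeast0)

lemma block_cols_carrier:
  assumes "A \<in> carrier_mat n a" "B \<in> carrier_mat n b"
  shows "block_cols A B \<in> carrier_mat n (a + b)"
  using assms unfolding block_cols_def by simp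

lemma sum_lessThan_add_split:
  fixes a b :: nat
  shows "(\<Sum>p<a + b. f p) = (\<Sum>p<a. f p) + (\<Sum>i<b. f (a + i))"
  by (induction b) (simp_all add: ac_simps)

lemma block_cols_row_sum:
  assumes "A \<in> carrier_mat n a" "B \<in> carrier_mat n b" "r < n"
  shows "(\<Sum>p<a + b. block_cols A B $$ (r, p) * y p)
           = (\<Sum>i<a. A $$ (r, i) * y i) + (\<Sum>i<b. B $$ (r, i) * y (a + i))"
  unfolding sum_lessThan_add_split using assms
  by (intro arg_cong2[where f = "(+)"] sum.cong) (auto simp: block_cols_def)

lemma bij_betw_pick:
  assumes "finite J"
  shows "bij_betw (pick J) {..<card J} J"
proof (rule bij_betw_byWitness[where f' = "\<lambda>p. card {a \<in> J. a < p}"])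
  show "\<forall>p\<in>J. pick J (card {a \<in> J. a < p}) = p"
    by (simp add: pick_card_in_set)
  show "\<forall>j\<in>{..<card J}. card {a \<in> J. a < pick J j} = j"
    by (simp add: card_pick)
  show "pick J ` {..<card J} \<subseteq> J"
    using pick_in_set by blast
  have "card {a \<in> J. a < p} < card J" if "p \<in> J" for p
  proof (rule psubset_card_mono[OF assms])
    show "{a \<in> J. a < p} \<subset> J"
      using that by auto
  qed
  then show "(\<lambda>p. card {a \<in> J. a < p}) ` J \<subseteq> {..<card J}"
    by auto
qed

lemma sum_supported_reindex_pick:
  fixes f y :: "nat \<Rightarrow> 'a :: semiring_0"
  assumes "J \<subseteq> {..<N}" "\<And>p. p \<notin> J \<Longrightarrow> y p = 0"
  shows "(\<Sum>p<N. f p * y p) = (\<Sum>j<card J. f (pick J j) * y (pick J j))"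
proof -
  have "finite J"
    by (rule finite_subset[OF assms(1)]) simp
  have "(\<Sum>p<N. f p * y p) = (\<Sum>p\<in>J. f p * y p)"
    using assms by (intro sum.mono_neutral_right) auto
  also have "\<dots> = (\<Sum>j<card J. f (pick J j) * y (pick J j))"
    by (rule sum.reindex_bij_betw[OF bij_betw_pick[OF \<open>finite J\<close>], symmetric])
  finally show ?thesis .
qed

lemma det_submatrix_cols_eq_0_imp_dependency:
  fixes B :: "'a :: field mat"
  assumes B: "B \<in> carrier_mat n N" and J: "J \<subseteq> {..<N}" "card J = n"
    and det: "det (submatrix B UNIV J) = 0"
  shows "\<exists>y. (\<exists>p\<in>J. y p \<noteq> 0) \<and> (\<forall>p. p \<notin> J \<longrightarrow> y p = 0)
             \<and> (\<forall>r<n. (\<Sum>p<N. B $$ (r, p) * y p) = 0)"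
proof -
  let ?A = "submatrix B UNIV J"
  have cols: "{j. j < N \<and> j \<in> J} = J"
    using J(1) by blast
  have A: "?A \<in> carrier_mat n n"
    using B unfolding carrier_mat_def by (simp add: dim_submatrix cols J(2))
  have "\<exists>x. x \<in> carrier_vec n \<and> x \<noteq> 0\<^sub>v n \<and> ?A *\<^sub>v x = 0\<^sub>v n"
    using det det_0_iff_vec_prod_zero_field[OF A] by simp
  then obtain x where x: "x \<in> carrier_vec n" "x \<noteq> 0\<^sub>v n" "?A *\<^sub>v x = 0\<^sub>v n"
    by blast
  define y where "y p = (if p \<in> J then x $ card {a \<in> J. a < p} else 0)" for p
  have y_pick: "pick J j \<in> J \<and> y (pick J j) = x $ j" if "j < n" for j
  proof -
    have "pick J j \<in> J" "card {a \<in> J. a < pick J j} = j"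
      using that J(2) pick_in_set card_pick by auto
    then show ?thesis
      by (simp add: y_def)
  qed
  have y_outside: "y p = 0" if "p \<notin> J" for p
    using that by (simp add: y_def)
  show ?thesis
  proof (intro exI conjI allI impI)
    have "\<exists>j<n. x $ j \<noteq> 0"
    proof (rule ccontr)
      assume "\<not> (\<exists>j<n. x $ j \<noteq> 0)"
      then have "x = 0\<^sub>v n"
        using x(1) by (intro eq_vecI) auto
      then show False
        using x(2) by simp
    qed
    then obtain j where "j < n" "x $ j \<noteq> 0"
      by blast
    then show "\<exists>p\<in>J. y p \<noteq> 0"
      using y_pick by (intro bexI[of _ "pick J j"]) auto
    show "p \<notin> J \<Longrightarrow> y p = 0" for p
      by (rule y_outside)
    fix r assume "r < n"
    have "(\<Sum>p<N. B $$ (r, p) * y p) = (\<Sum>j<card J. B $$ (r, pick J j) * y (pick J j))"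
      by (rule sum_supported_reindex_pick[OF J(1) y_outside])
    also have "\<dots> = (\<Sum>j<n. B $$ (r, pick J j) * x $ j)"
      unfolding J(2) using y_pick by (intro sum.cong) auto
    also have "\<dots> = (?A *\<^sub>v x) $ r"
      using \<open>r < n\<close> x(1) A B
      by (auto simp: scalar_prod_def submatrix_index pick_UNIV cols J(2) lessThan_atLeast0
          intro!: sum.cong)
    also have "\<dots> = 0"
      using x(3) \<open>r < n\<close> by simp
    finally show "(\<Sum>p<N. B $$ (r, p) * y p) = 0" .
  qed
qed

lemma cos_2pi_div_bounds:
  assumes "m \<ge> 4"
  shows "0 \<le> cos (2 * pi / real m)" "cos (2 * pi / real m) < 1" "0 < sin (2 * pi / real m)"
proof -
  have "0 < 2 * pi / real m" "2 * pi / real m \<le> pi / 2"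
    using assms by (simp_all add: field_simps)
  then show "0 \<le> cos (2 * pi / real m)" "cos (2 * pi / real m) < 1" "0 < sin (2 * pi / real m)"
    using cos_monotone_0_pi[of 0 "2 * pi / real m"] by (auto intro: cos_ge_zero sin_gt_zero)
qed

lemma cos_2pi_frac_less:
  fixes m s :: nat
  assumes "2 \<le> s" "s + 2 \<le> m"
  shows "cos (2 * pi * real s / real m) < cos (2 * pi / real m)"
proof -
  define t where "t = min s (m - s)"
  have "cos (2 * pi * real s / real m) = cos (2 * pi * real t / real m)"
  proof (cases "s \<le> m - s")
    case False
    have "2 * pi * real (m - s) / real m = 2 * pi - 2 * pi * real s / real m"
      using assms by (simp add: field_simps of_nat_diff)
    then show ?thesis
      using False by (simp add: t_def)
  qed (simp add: t_def)
  moreover have "2 * pi / real m < 2 * pi * real t / real m" "2 * pi * real t / real m \<le> pi"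
    using assms by (auto simp: t_def field_simps of_nat_diff)
  ultimately show ?thesis
    using cos_monotone_0_pi[of "2 * pi / real m" "2 * pi * real t / real m"] assms by simp
qed

locale cyclic_frame =
  fixes m :: nat
  assumes four_le_m: "4 \<le> m"
begin

definition gap :: real where
  "gap = 1 - cos (2 * pi / real m)"

definition eta :: complex where
  "eta = Complex ((1 + cos (2 * pi / real m)) / 2) (sqrt (1 - ((1 + cos (2 * pi / real m)) / 2)\<^sup>2))"

definition P_wt :: "nat \<Rightarrow> real" where
  "P_wt s = (cmod (e_frac m (real s) - eta))\<^sup>2"

definition Q_wt :: "nat \<Rightarrow> real" where
  "Q_wt s = (cmod (e_frac m (real s) - cnj eta))\<^sup>2"

definition tau :: "nat \<Rightarrow> real" where
  "tau s = sqrt (Q_wt s - gap\<^sup>2 / P_wt s)"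

lemma gap_pos: "0 < gap"
  using cos_2pi_div_bounds[OF four_le_m] by (simp add: gap_def)

lemma Re_eta: "Re eta = (1 + cos (2 * pi / real m)) / 2"
  by (simp add: eta_def)

lemma Im_eta_pos: "0 < Im eta"
proof -
  have "0 \<le> cos (2 * pi / real m)" "cos (2 * pi / real m) < 1"
    using cos_2pi_div_bounds[OF four_le_m] by simp_all
  then have "((1 + cos (2 * pi / real m)) / 2)\<^sup>2 < 1"
    by (simp add: abs_square_less_1)
  then show ?thesis
    by (simp add: eta_def)
qed

lemma eta_mult_cnj [simp]: "eta * cnj eta = 1"
proof -
  have "((1 + cos (2 * pi / real m)) / 2)\<^sup>2 \<le> 1"
    using cos_2pi_div_bounds[OF four_le_m] by (simp add: abs_square_le_1)
  then show ?thesis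
    by (simp add: complex_mult_cnj eta_def)
qed

lemma P_wt_complex:
  "complex_of_real (P_wt s) = 2 - cnj eta * e_frac m (real s) - eta * e_frac m (- real s)"
  unfolding P_wt_def complex_norm_square by (simp add: algebra_simps cnj_e_frac)

lemma Q_wt_complex:
  "complex_of_real (Q_wt s) = 2 - eta * e_frac m (real s) - cnj eta * e_frac m (- real s)"
proof -
  have "cnj eta * eta = 1"
    by (simp add: mult.commute)
  then show ?thesis
    unfolding Q_wt_def complex_norm_square by (simp add: algebra_simps cnj_e_frac)
qed

lemma P_wt_mult_Q_wt:
  "P_wt s * Q_wt s = (2 * cos (2 * pi * real s / real m) - 1 - cos (2 * pi / real m))\<^sup>2"
proof -
  let ?u = "e_frac m (real s)"
  let ?x = "2 * Re ?u - 2 * Re eta"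
  have "(?u - eta) * (?u - cnj eta) = ?u * ((?u + cnj ?u) - (eta + cnj eta))"
    using eta_mult_cnj e_frac_mult_cnj[of m "real s"] by (simp add: algebra_simps)
  also have "\<dots> = ?u * complex_of_real ?x"
    by (simp add: complex_add_cnj)
  finally have factor: "(?u - eta) * (?u - cnj eta) = ?u * complex_of_real ?x" .
  have "P_wt s * Q_wt s = (cmod ((?u - eta) * (?u - cnj eta)))\<^sup>2"
    unfolding P_wt_def Q_wt_def by (simp add: norm_mult power_mult_distrib)
  also have "\<dots> = ?x\<^sup>2"
    unfolding factor norm_mult norm_e_frac norm_of_real by simp
  finally show ?thesis
    by (simp add: Re_e_frac Re_eta add_divide_distrib diff_diff_eq)
qed

lemma e_frac_last: "e_frac m (real (m - 1)) = cnj (e_frac m 1)"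
proof -
  have "real (m - 1) = - 1 + real m * of_int 1"
    using four_le_m by (simp add: of_nat_diff)
  then show ?thesis
    using four_le_m e_frac_shift[of m "- 1" 1] by (simp add: cnj_e_frac)
qed

lemma cos_2pi_frac_cases:
  assumes "s < m"
  obtains "s = 0" "cos (2 * pi * real s / real m) = 1"
  | "s = 1 \<or> s = m - 1" "cos (2 * pi * real s / real m) = cos (2 * pi / real m)"
  | "2 \<le> s" "s \<le> m - 2" "cos (2 * pi * real s / real m) < cos (2 * pi / real m)"
proof -
  have "Re (e_frac m (real (m - 1))) = Re (e_frac m 1)"
    unfolding e_frac_last by simp
  then have "cos (2 * pi * real (m - 1) / real m) = cos (2 * pi / real m)"
    by (simp add: Re_e_frac)
  then show ?thesis
    using that assms four_le_m cos_2pi_frac_less[of s m]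
    by (cases "s = 0 \<or> s = 1 \<or> s = m - 1") auto
qed

lemma gap_sq_le_P_wt_mult_Q_wt: "s < m \<Longrightarrow> gap\<^sup>2 \<le> P_wt s * Q_wt s"
  and P_wt_mult_Q_wt_eq: "s \<in> {0, 1, m - 1} \<Longrightarrow> P_wt s * Q_wt s = gap\<^sup>2"
  and gap_sq_less_P_wt_mult_Q_wt: "2 \<le> s \<Longrightarrow> s \<le> m - 2 \<Longrightarrow> gap\<^sup>2 < P_wt s * Q_wt s"
proof -
  define c where "c = cos (2 * pi / real m)"
  have "0 \<le> c" "c < 1"
    using cos_2pi_div_bounds[OF four_le_m] by (simp_all add: c_def)
  have PQ: "P_wt s * Q_wt s = (2 * cos (2 * pi * real s / real m) - 1 - c)\<^sup>2" and "gap = 1 - c" for s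
    by (simp_all add: P_wt_mult_Q_wt gap_def c_def)
  have less: "gap\<^sup>2 < P_wt s * Q_wt s" if "cos (2 * pi * real s / real m) < c" for s
  proof -
    have "(1 - c)\<^sup>2 < (1 + c - 2 * cos (2 * pi * real s / real m))\<^sup>2"
      using that \<open>c < 1\<close> by (intro power_strict_mono) auto
    then show ?thesis
      unfolding PQ \<open>gap = 1 - c\<close> by (simp add: power2_eq_square algebra_simps)
  qed
  have eq: "P_wt s * Q_wt s = gap\<^sup>2" if "cos (2 * pi * real s / real m) = 1 \<or> cos (2 * pi * real s / real m) = c" for s
    unfolding PQ \<open>gap = 1 - c\<close> using that by (auto simp: power2_commute)
  show "gap\<^sup>2 \<le> P_wt s * Q_wt s" if "s < m"
    using that by (cases rule: cos_2pi_frac_cases) (use less eq c_def in fastforce)+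
  show "P_wt s * Q_wt s = gap\<^sup>2" if "s \<in> {0, 1, m - 1}"
  proof -
    have "s < m"
      using that four_le_m by auto
    then show ?thesis
      using that by (cases rule: cos_2pi_frac_cases) (use eq c_def in auto)
  qed
  show "gap\<^sup>2 < P_wt s * Q_wt s" if "2 \<le> s" "s \<le> m - 2"
    using less cos_2pi_frac_less[of s m] that four_le_m c_def by simp
qed

lemma P_wt_pos: "s < m \<Longrightarrow> 0 < P_wt s"
  using gap_sq_le_P_wt_mult_Q_wt[of s] gap_pos unfolding P_wt_def
  by (cases "P_wt s = 0") (auto simp: P_wt_def)

lemma P_wt_0: "P_wt 0 = gap"
proof -
  have "(cmod eta)\<^sup>2 = 1"
    using complex_norm_square[of eta] eta_mult_cnj by (simp only: of_real_eq_1_iff)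
  then have "(Re eta)\<^sup>2 + (Im eta)\<^sup>2 = 1"
    unfolding cmod_power2 .
  then show ?thesis
    unfolding P_wt_def cmod_power2 by (simp add: Re_eta gap_def power2_eq_square algebra_simps)
qed

lemma Q_wt_minus_P_wt: "Q_wt s - P_wt s = 4 * Im eta * sin (2 * pi * real s / real m)"
  unfolding P_wt_def Q_wt_def cmod_power2 by (simp add: Im_e_frac power2_eq_square algebra_simps)

lemma P_wt_last: "P_wt (m - 1) = Q_wt 1"
proof -
  have "cmod (cnj (e_frac m 1) - eta) = cmod (e_frac m 1 - cnj eta)"
    by (metis complex_cnj_cnj complex_cnj_diff complex_mod_cnj)
  then show ?thesis
    unfolding P_wt_def Q_wt_def e_frac_last by simp
qed

lemma P_wt_1_mult_P_wt_last: "P_wt 1 * P_wt (m - 1) = gap\<^sup>2"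
  unfolding P_wt_last using P_wt_mult_Q_wt_eq[of 1] by simp

lemma P_wt_1_less_P_wt_last: "P_wt 1 < P_wt (m - 1)"
proof -
  have "0 < 4 * Im eta * sin (2 * pi / real m)"
    using Im_eta_pos cos_2pi_div_bounds[OF four_le_m] by simp
  then show ?thesis
    unfolding P_wt_last using Q_wt_minus_P_wt[of 1] by simp
qed

lemma tau_sq: "s < m \<Longrightarrow> (tau s)\<^sup>2 = Q_wt s - gap\<^sup>2 / P_wt s"
  using gap_sq_le_P_wt_mult_Q_wt[of s] P_wt_pos[of s]
  by (simp add: tau_def divide_le_eq mult.commute)

lemma tau_eq_0: "s \<in> {0, 1, m - 1} \<Longrightarrow> tau s = 0"
  using P_wt_mult_Q_wt_eq[of s] P_wt_pos[of s] four_le_m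
  by (auto simp: tau_def field_simps)

lemma tau_pos: "2 \<le> s \<Longrightarrow> s \<le> m - 2 \<Longrightarrow> 0 < tau s"
  using gap_sq_less_P_wt_mult_Q_wt[of s] P_wt_pos[of s]
  by (simp add: tau_def divide_less_eq mult.commute)

definition Wv :: "complex mat" where
  "Wv = mat (2 * m - 3) m (\<lambda>(r, i).
     if r < m then (e_frac m (real r) - eta) * e_frac m (real r * real i) else 0)"

definition Ww :: "complex mat" where
  "Ww = mat (2 * m - 3) m (\<lambda>(r, i).
     if r < m then complex_of_real gap / cnj (e_frac m (real r) - eta) * e_frac m (real r * real i)
     else complex_of_real (tau (r + 2 - m)) * e_frac m (real (r + 2 - m) * real i))"

lemma Wv_carrier: "Wv \<in> carrier_mat (2 * m - 3) m"
  by (simp add: Wv_def)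

lemma Ww_carrier: "Ww \<in> carrier_mat (2 * m - 3) m"
  by (simp add: Ww_def)

lemma Wv_fourier_row: "r < m \<Longrightarrow> i < m \<Longrightarrow> Wv $$ (r, i) = (e_frac m (real r) - eta) * e_frac m (real r * real i)"
  using four_le_m by (simp add: Wv_def)

lemma Ww_fourier_row:
  "r < m \<Longrightarrow> i < m \<Longrightarrow> Ww $$ (r, i) = complex_of_real gap / cnj (e_frac m (real r) - eta) * e_frac m (real r * real i)"
  using four_le_m by (simp add: Ww_def)

lemma extra_row_index:
  assumes "s \<in> {2..m - 2}"
  shows "s + (m - 2) < 2 * m - 3" "\<not> s + (m - 2) < m" "s + (m - 2) + 2 - m = s"
  using assms four_le_m by auto

lemma Wv_extra_row: "s \<in> {2..m - 2} \<Longrightarrow> i < m \<Longrightarrow> Wv $$ (s + (m - 2), i) = 0"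
  using extra_row_index[of s] by (simp add: Wv_def)

lemma Ww_extra_row:
  "s \<in> {2..m - 2} \<Longrightarrow> i < m \<Longrightarrow> Ww $$ (s + (m - 2), i) = complex_of_real (tau s) * e_frac m (real s * real i)"
  using extra_row_index[of s] by (simp add: Ww_def)

lemma sum_rows_split: "(\<Sum>r<2 * m - 3. h r) = (\<Sum>s<m. h s) + (\<Sum>s\<in>{2..m - 2}. h (s + (m - 2)))"
proof -
  have "(\<Sum>r<2 * m - 3. h r) = (\<Sum>s<m. h s) + (\<Sum>s<m - 3. h (m + s))"
    using sum_lessThan_add_split[of h m "m - 3"] four_le_m by (simp add: mult_2)
  also have "(\<Sum>s<m - 3. h (m + s)) = (\<Sum>s\<in>{2..m - 2}. h (s + (m - 2)))"
  proof (rule sum.reindex_bij_witness[where i = "\<lambda>s. s - 2" and j = "\<lambda>s. s + 2"])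
    fix s assume "s \<in> {..<m - 3}"
    moreover have "s + 2 + (m - 2) = m + s"
      using four_le_m by simp
    ultimately show "s + 2 - 2 = s" "s + 2 \<in> {2..m - 2}" "h (s + 2 + (m - 2)) = h (m + s)"
      by auto
  qed auto
  finally show ?thesis .
qed

lemma fourier_row_product:
  "(c * e_frac m (real s * real i)) * cnj (d * e_frac m (real s * real j))
     = c * cnj d * e_frac m (real s * of_int (int i - int j))"
  using e_frac_mult_cnj_e_frac[of m "real s" i j] by (simp add: mult_ac)

lemma Wv_fourier_row_cprod:
  assumes "s < m" "i < m" "j < m"
  shows "Wv $$ (s, i) * cnj (Wv $$ (s, j)) = complex_of_real (P_wt s) * e_frac m (real s * of_int (int i - int j))"
proof -
  have "Wv $$ (s, i) * cnj (Wv $$ (s, j))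
      = (e_frac m (real s) - eta) * cnj (e_frac m (real s) - eta) * e_frac m (real s * of_int (int i - int j))"
    using assms by (simp only: Wv_fourier_row fourier_row_product)
  then show ?thesis
    by (simp only: P_wt_def complex_norm_square)
qed

lemma Ww_fourier_row_cprod:
  assumes "s < m" "i < m" "j < m"
  shows "Ww $$ (s, i) * cnj (Ww $$ (s, j))
    = complex_of_real (gap\<^sup>2 / P_wt s) * e_frac m (real s * of_int (int i - int j))"
proof -
  define a where "a = e_frac m (real s) - eta"
  have "a * cnj a = complex_of_real (P_wt s)"
    unfolding a_def P_wt_def complex_norm_square ..
  moreover have "Ww $$ (s, i) * cnj (Ww $$ (s, j))
      = complex_of_real gap / cnj a * cnj (complex_of_real gap / cnj a) * e_frac m (real s * of_int (int i - int j))"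
    using assms unfolding a_def by (simp only: Ww_fourier_row fourier_row_product)
  ultimately show ?thesis
    by (simp add: power2_eq_square mult.commute)
qed

lemma Wv_Ww_fourier_row_cprod:
  assumes "s < m" "i < m" "j < m"
  shows "Wv $$ (s, i) * cnj (Ww $$ (s, j)) = complex_of_real gap * e_frac m (real s * of_int (int i - int j))"
proof -
  define a where "a = e_frac m (real s) - eta"
  have "a \<noteq> 0"
    using P_wt_pos[OF assms(1)] by (auto simp: a_def P_wt_def)
  moreover have "Wv $$ (s, i) * cnj (Ww $$ (s, j))
      = a * cnj (complex_of_real gap / cnj a) * e_frac m (real s * of_int (int i - int j))"
    using assms unfolding a_def by (simp only: Wv_fourier_row Ww_fourier_row fourier_row_product)
  ultimately show ?thesis
    by simp
qed

lemma Ww_extra_row_cprod: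
  assumes "s \<in> {2..m - 2}" "i < m" "j < m"
  shows "Ww $$ (s + (m - 2), i) * cnj (Ww $$ (s + (m - 2), j))
    = complex_of_real ((tau s)\<^sup>2) * e_frac m (real s * of_int (int i - int j))"
  using assms by (simp only: Ww_extra_row fourier_row_product) (simp add: power2_eq_square)

lemma cprod_col_Wv_Wv:
  assumes "i < m" "j < m"
  shows "col Wv i \<bullet>c col Wv j = (\<Sum>s<m. complex_of_real (P_wt s) * e_frac m (real s * of_int (int i - int j)))"
proof -
  have "col Wv i \<bullet>c col Wv j = (\<Sum>s<m. Wv $$ (s, i) * cnj (Wv $$ (s, j)))"
    using assms by (simp add: cscalar_prod_col[OF Wv_carrier Wv_carrier] sum_rows_split Wv_extra_row)
  also have "\<dots> = (\<Sum>s<m. complex_of_real (P_wt s) * e_frac m (real s * of_int (int i - int j)))"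
    using assms by (intro sum.cong) (simp_all add: Wv_fourier_row_cprod)
  finally show ?thesis .
qed

lemma cprod_col_Ww_Ww:
  assumes "i < m" "j < m"
  shows "col Ww i \<bullet>c col Ww j = (\<Sum>s<m. complex_of_real (Q_wt s) * e_frac m (real s * of_int (int i - int j)))"
proof -
  let ?e = "\<lambda>s. e_frac m (real s * of_int (int i - int j))"
  have "col Ww i \<bullet>c col Ww j
      = (\<Sum>s<m. Ww $$ (s, i) * cnj (Ww $$ (s, j)))
        + (\<Sum>s\<in>{2..m - 2}. Ww $$ (s + (m - 2), i) * cnj (Ww $$ (s + (m - 2), j)))"
    using assms by (simp add: cscalar_prod_col[OF Ww_carrier Ww_carrier] sum_rows_split)
  also have "\<dots> = (\<Sum>s<m. complex_of_real (gap\<^sup>2 / P_wt s) * ?e s)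
      + (\<Sum>s\<in>{2..m - 2}. complex_of_real ((tau s)\<^sup>2) * ?e s)"
    using assms by (intro arg_cong2[where f = "(+)"] sum.cong) (simp_all add: Ww_fourier_row_cprod Ww_extra_row_cprod)
  also have "(\<Sum>s\<in>{2..m - 2}. complex_of_real ((tau s)\<^sup>2) * ?e s) = (\<Sum>s<m. complex_of_real ((tau s)\<^sup>2) * ?e s)"
  proof (rule sum.mono_neutral_left)
    show "\<forall>s\<in>{..<m} - {2..m - 2}. complex_of_real ((tau s)\<^sup>2) * ?e s = 0"
    proof
      fix s assume "s \<in> {..<m} - {2..m - 2}"
      then have "s \<in> {0, 1, m - 1}"
        by auto
      then show "complex_of_real ((tau s)\<^sup>2) * ?e s = 0"
        by (simp add: tau_eq_0)
    qed
  qed auto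
  also have "(\<Sum>s<m. complex_of_real (gap\<^sup>2 / P_wt s) * ?e s) + (\<Sum>s<m. complex_of_real ((tau s)\<^sup>2) * ?e s)
      = (\<Sum>s<m. complex_of_real (Q_wt s) * ?e s)"
    unfolding sum.distrib[symmetric]
  proof (rule sum.cong)
    fix s assume "s \<in> {..<m}"
    then have "gap\<^sup>2 / P_wt s + (tau s)\<^sup>2 = Q_wt s"
      by (simp add: tau_sq)
    then show "complex_of_real (gap\<^sup>2 / P_wt s) * ?e s + complex_of_real ((tau s)\<^sup>2) * ?e s
        = complex_of_real (Q_wt s) * ?e s"
      by (simp only: flip: of_real_add distrib_right)
  qed simp
  finally show ?thesis .
qed

lemma cprod_col_Wv_Ww:
  assumes "i < m" "j < m"
  shows "col Wv i \<bullet>c col Ww j = complex_of_real gap * (\<Sum>s<m. e_frac m (real s * of_int (int i - int j)))"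
proof -
  have "col Wv i \<bullet>c col Ww j = (\<Sum>s<m. Wv $$ (s, i) * cnj (Ww $$ (s, j)))"
    using assms by (simp add: cscalar_prod_col[OF Wv_carrier Ww_carrier] sum_rows_split Wv_extra_row)
  also have "\<dots> = (\<Sum>s<m. complex_of_real gap * e_frac m (real s * of_int (int i - int j)))"
    using assms by (intro sum.cong) (simp_all add: Wv_Ww_fourier_row_cprod)
  finally show ?thesis
    by (simp add: sum_distrib_left)
qed

lemma cprod_col_Wv_Wv_eq_0:
  assumes "i < m" "j < m" "(int j - int i) mod int m \<notin> {0, 1, int m - 1}"
  shows "col Wv i \<bullet>c col Wv j = 0"
  unfolding cprod_col_Wv_Wv[OF assms(1,2)]
  using four_le_m mod_notin_imp_not_dvd_diff[OF _ assms(3)]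
  by (intro sum_first_harmonics_mult_e_frac_eq_0[where \<alpha> = 2 and \<beta> = "- cnj eta" and \<gamma> = "- eta"])
    (simp_all add: P_wt_complex)

lemma cprod_col_Ww_Ww_eq_0:
  assumes "i < m" "j < m" "(int j - int i) mod int m \<notin> {0, 1, int m - 1}"
  shows "col Ww i \<bullet>c col Ww j = 0"
  unfolding cprod_col_Ww_Ww[OF assms(1,2)]
  using four_le_m mod_notin_imp_not_dvd_diff[OF _ assms(3)]
  by (intro sum_first_harmonics_mult_e_frac_eq_0[where \<alpha> = 2 and \<beta> = "- eta" and \<gamma> = "- cnj eta"])
    (simp_all add: Q_wt_complex)

lemma cprod_col_Wv_Ww_eq_0:
  assumes "i < m" "j < m" "i \<noteq> j"
  shows "col Wv i \<bullet>c col Ww j = 0"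
  unfolding cprod_col_Wv_Ww[OF assms(1,2)]
  using four_le_m assms sum_e_frac_eq_0[of m "int i - int j"] int_dvd_diff_iff_eq[of i m j] by simp

lemma Wv_fourier_row_sum: "s < m \<Longrightarrow> (\<Sum>i<m. Wv $$ (s, i) * y i) = (e_frac m (real s) - eta) * dft m y s"
  by (simp add: Wv_fourier_row dft_def sum_distrib_left mult_ac)

lemma Ww_fourier_row_sum:
  "s < m \<Longrightarrow> (\<Sum>i<m. Ww $$ (s, i) * y i) = complex_of_real gap / cnj (e_frac m (real s) - eta) * dft m y s"
  by (simp add: Ww_fourier_row dft_def sum_distrib_left mult_ac)

lemma Wv_extra_row_sum: "s \<in> {2..m - 2} \<Longrightarrow> (\<Sum>i<m. Wv $$ (s + (m - 2), i) * y i) = 0"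
  by (simp add: Wv_extra_row)

lemma Ww_extra_row_sum:
  "s \<in> {2..m - 2} \<Longrightarrow> (\<Sum>i<m. Ww $$ (s + (m - 2), i) * y i) = complex_of_real (tau s) * dft m y s"
  by (simp add: Ww_extra_row dft_def sum_distrib_left mult_ac)

context
  fixes yv yw :: "nat \<Rightarrow> complex"
  assumes kernel: "\<And>r. r < 2 * m - 3 \<Longrightarrow> (\<Sum>i<m. Wv $$ (r, i) * yv i) + (\<Sum>i<m. Ww $$ (r, i) * yw i) = 0"
begin

lemma kernel_dft_w:
  assumes "s < m"
  shows "dft m yw s = - complex_of_real (P_wt s / gap) * dft m yv s"
proof -
  define a where "a = e_frac m (real s) - eta"
  have a_cnj: "a * cnj a = complex_of_real (P_wt s)"
    unfolding a_def P_wt_def complex_norm_square ..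
  have "a \<noteq> 0"
    using P_wt_pos[OF \<open>s < m\<close>] by (auto simp: a_def P_wt_def)
  have "a * dft m yv s + complex_of_real gap / cnj a * dft m yw s = 0"
    using kernel[of s] \<open>s < m\<close> four_le_m by (simp add: Wv_fourier_row_sum Ww_fourier_row_sum a_def)
  then have "complex_of_real gap / cnj a * dft m yw s = - (a * dft m yv s)"
    by (simp add: eq_neg_iff_add_eq_0 add.commute)
  then have "complex_of_real gap * dft m yw s = - (a * cnj a) * dft m yv s"
    using \<open>a \<noteq> 0\<close> by (simp add: field_simps)
  then show ?thesis
    using gap_pos unfolding a_cnj by (simp add: field_simps)
qed

lemma kernel_dft_vanishes:
  assumes "2 \<le> s" "s \<le> m - 2"
  shows "dft m yv s = 0" "dft m yw s = 0"
proof -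
  have s: "s \<in> {2..m - 2}"
    using assms by simp
  have "complex_of_real (tau s) * dft m yw s = 0"
    using kernel[OF extra_row_index(1)[OF s]] unfolding Wv_extra_row_sum[OF s] Ww_extra_row_sum[OF s]
    by simp
  then show "dft m yw s = 0"
    using tau_pos[OF assms] by simp
  moreover have "s < m"
    using assms four_le_m by linarith
  ultimately show "dft m yv s = 0"
    using kernel_dft_w[of s] P_wt_pos[of s] gap_pos by simp
qed

end

definition lam :: real where
  "lam = P_wt 1 / gap"

lemma lam_pos: "0 < lam"
  using P_wt_pos[of 1] gap_pos four_le_m by (simp add: lam_def)

lemma P_wt_last_div_gap: "P_wt (m - 1) / gap = 1 / lam"
  using P_wt_1_mult_P_wt_last P_wt_pos[of 1] gap_pos four_le_m
  by (simp add: lam_def field_simps power2_eq_square)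

lemma lam_neq_1: "lam \<noteq> 1"
proof
  assume "lam = 1"
  then have "P_wt 1 = gap" "P_wt (m - 1) = gap"
    using P_wt_last_div_gap gap_pos by (simp_all add: lam_def)
  then show False
    using P_wt_1_less_P_wt_last by simp
qed

definition node :: "nat \<Rightarrow> complex" where
  "node p = (if p < m then e_frac m (real p) else e_frac m (real (p - m)) / complex_of_real lam)"

lemma node_inj:
  assumes "p < 2 * m" "q < 2 * m" "node p = node q"
  shows "p = q"
proof -
  have norm_node: "norm (node p) = (if p < m then 1 else 1 / lam)" for p
    using lam_pos by (simp add: node_def norm_divide)
  have "p < m \<longleftrightarrow> q < m"
    using norm_node[of p] norm_node[of q] assms(3) lam_neq_1 lam_pos
    by (auto split: if_splits simp: field_simps)
  moreover have "p = q" if "p < m" "q < m"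
    using that assms(3) e_frac_inj[of p m q] by (simp add: node_def)
  moreover have "p = q" if "\<not> p < m" "\<not> q < m"
  proof -
    have "e_frac m (real (p - m)) = e_frac m (real (q - m))"
      using that assms(3) lam_pos by (simp add: node_def del: of_nat_diff)
    then have "p - m = q - m"
      using that assms(1,2) by (intro e_frac_inj) auto
    then show ?thesis
      using that by simp
  qed
  ultimately show ?thesis
    by blast
qed

lemma kernel_quadratic:
  assumes kernel: "\<And>r. r < 2 * m - 3 \<Longrightarrow> (\<Sum>i<m. Wv $$ (r, i) * y i) + (\<Sum>i<m. Ww $$ (r, i) * y (m + i)) = 0"
  shows "\<exists>a b c. \<forall>p<2 * m. of_nat m * e_frac m (real (p mod m)) * y p
           = (if p < m then 1 else - complex_of_real lam) * (a * node p ^ 2 + b * node p + c)"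
proof (intro exI allI impI)
  let ?a = "dft m y (m - 1)" and ?b = "dft m y 0" and ?c = "dft m y 1"
  let ?yw = "\<lambda>i. y (m + i)"
  have m3: "m \<ge> 3"
    using four_le_m by simp
  note vanish = kernel_dft_vanishes[where yv = y and yw = ?yw, OF kernel]
  note dft_w = kernel_dft_w[where yv = y and yw = ?yw, OF kernel]
  fix p assume "p < 2 * m"
  show "of_nat m * e_frac m (real (p mod m)) * y p
      = (if p < m then 1 else - complex_of_real lam) * (?a * node p ^ 2 + ?b * node p + ?c)"
  proof (cases "p < m")
    case True
    then show ?thesis
      using dft_supported_near_0_imp_quadratic[OF m3 True, of y] vanish(1) by (simp add: node_def)
  next
    case False
    define i where "i = p - m"
    have i: "i < m" "p = m + i" "p mod m = i"
      using \<open>p < 2 * m\<close> False by (auto simp: i_def le_mod_geq)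
    let ?u = "e_frac m (real i)"
    have "of_nat m * ?u * ?yw i = dft m ?yw (m - 1) * ?u ^ 2 + dft m ?yw 0 * ?u + dft m ?yw 1"
      using dft_supported_near_0_imp_quadratic[OF m3 i(1), of ?yw] vanish(2) by simp
    also have "\<dots> = - (complex_of_real (1 / lam) * ?a * ?u ^ 2 + ?b * ?u + complex_of_real lam * ?c)"
    proof -
      have "dft m ?yw 0 = - ?b"
        using dft_w[of 0] four_le_m gap_pos by (simp add: P_wt_0)
      moreover have "dft m ?yw 1 = - complex_of_real lam * ?c"
        using dft_w[of 1] four_le_m unfolding lam_def by simp
      moreover have "dft m ?yw (m - 1) = - complex_of_real (1 / lam) * ?a"
        using dft_w[of "m - 1"] four_le_m unfolding P_wt_last_div_gap[symmetric] by simp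
      ultimately show ?thesis
        by (simp add: algebra_simps)
    qed
    also have "\<dots> = - complex_of_real lam * (?a * (?u / complex_of_real lam) ^ 2 + ?b * (?u / complex_of_real lam) + ?c)"
      using lam_pos by (simp add: field_simps power2_eq_square)
    finally show ?thesis
      using False i by (simp add: node_def)
  qed
qed

lemma det_submatrix_block_cols_neq_0:
  assumes J: "J \<subseteq> {..<2 * m}" "card J = 2 * m - 3"
  shows "det (submatrix (block_cols Wv Ww) UNIV J) \<noteq> 0"
proof
  assume det: "det (submatrix (block_cols Wv Ww) UNIV J) = 0"
  have B: "block_cols Wv Ww \<in> carrier_mat (2 * m - 3) (m + m)"
    by (rule block_cols_carrier[OF Wv_carrier Ww_carrier])
  obtain y where y: "\<exists>p\<in>J. y p \<noteq> 0" "\<And>p. p \<notin> J \<Longrightarrow> y p = 0"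
    and rows: "\<And>r. r < 2 * m - 3 \<Longrightarrow> (\<Sum>p<m + m. block_cols Wv Ww $$ (r, p) * y p) = 0"
    using det_submatrix_cols_eq_0_imp_dependency[OF B _ J(2) det] J(1) by (auto simp: mult_2)
  have "(\<Sum>i<m. Wv $$ (r, i) * y i) + (\<Sum>i<m. Ww $$ (r, i) * y (m + i)) = 0" if "r < 2 * m - 3" for r
    using rows[OF that] block_cols_row_sum[OF Wv_carrier Ww_carrier that] by simp
  then obtain a b c where quad: "\<And>p. p < 2 * m \<Longrightarrow> of_nat m * e_frac m (real (p mod m)) * y p
      = (if p < m then 1 else - complex_of_real lam) * (a * node p ^ 2 + b * node p + c)"
    using kernel_quadratic by blast
  have root: "a * node p ^ 2 + b * node p + c = 0" if "p < 2 * m" "p \<notin> J" for p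
    using quad[OF that(1)] y(2)[OF that(2)] lam_pos by (simp split: if_splits)
  have "finite J"
    by (rule finite_subset[OF J(1)]) simp
  then have "card ({..<2 * m} - J) = 3"
    using J four_le_m by (simp add: card_Diff_subset)
  then obtain p1 p2 p3 where gaps: "{..<2 * m} - J = {p1, p2, p3}" "p1 \<noteq> p2" "p1 \<noteq> p3" "p2 \<noteq> p3"
    by (auto simp: card_3_iff)
  moreover have "p \<in> {..<2 * m} - J" if "p \<in> {p1, p2, p3}" for p
    using that gaps(1) by blast
  ultimately have "a = 0 \<and> b = 0 \<and> c = 0"
    using node_inj root by (intro quadratic_eq_0_if_three_roots[of "node p1" "node p2" "node p3"]) blast+
  then have "y p = 0" if "p < 2 * m" for p
    using quad[OF that] four_le_m by simp
  then show False
    using y(1) J(1) by auto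
qed

end

theorem lemma3:
  fixes k :: nat
  assumes "k \<ge> 1"
  shows "\<exists>Wv Ww :: complex mat.
    Wv \<in> carrier_mat (4*k+1) (2*k+2) \<and> Ww \<in> carrier_mat (4*k+1) (2*k+2) \<and>
    (\<forall>i<2*k+2. \<forall>j<2*k+2.
       (int j - int i) mod int (2*k+2) \<notin> {0, 1, int (2*k+1)} \<longrightarrow> orth (col Wv i) (col Wv j)) \<and>
    (\<forall>i<2*k+2. \<forall>j<2*k+2.
       (int j - int i) mod int (2*k+2) \<notin> {0, 1, int (2*k+1)} \<longrightarrow> orth (col Ww i) (col Ww j)) \<and>
    (\<forall>i<2*k+2. \<forall>j<2*k+2. i \<noteq> j \<longrightarrow> orth (col Wv i) (col Ww j)) \<and>
    (\<forall>J. J \<subseteq> {..<4*k+4} \<and> card J = 4*k+1 \<longrightarrow>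
       det (submatrix (block_cols Wv Ww) UNIV J) \<noteq> 0)"
proof -
  interpret cyclic_frame "2 * k + 2"
    using assms by unfold_locales simp
  have dims: "2 * (2 * k + 2) - 3 = 4 * k + 1" "2 * (2 * k + 2) = 4 * k + 4" "int (2 * k + 1) = int (2 * k + 2) - 1"
    by simp_all
  have det: "det (submatrix (block_cols Wv Ww) UNIV J) \<noteq> 0" if "J \<subseteq> {..<4*k+4}" "card J = 4*k+1" for J
    using det_submatrix_block_cols_neq_0[of J] that unfolding dims by simp
  show ?thesis
    unfolding orth_def
    by (rule exI[of _ Wv], rule exI[of _ Ww])
      (use Wv_carrier Ww_carrier cprod_col_Wv_Wv_eq_0 cprod_col_Ww_Ww_eq_0 cprod_col_Wv_Ww_eq_0 det
        in \<open>simp add: dims\<close>)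
qed

end
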